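(* Let $x_1,\dots,x_N\in\mathbb{R}^d$ be sample points, let $(\mathcal F_\tau)_{\tau\ge 0}$ be the evolution maps of a dynamical system on $\mathbb{R}^d$, and let $g:\mathbb{R}^d\to\mathbb{R}^{1\times L}$ be a smooth observation function, with Koopman operator $\mathcal K_\tau(g)(x)=g(\mathcal F_\tau(x))$. Suppose there are finitely many scalars $\lambda_1,\dots,\lambda_R\in\mathbb{C}$, smooth scalar functions $\phi_1,\dots,\phi_R$ and row vectors $v_1^\ast,\dots,v_R^\ast\in\mathbb{C}^{1\times L}$ such that there is zero Koopman estimation error, i.e. $$\mathcal K_\tau(g)(x)=\sum_{m=1}^R e^{\tau\lambda_m}\phi_m(x)\,v_m^\ast$$ for all $x$ and all $\tau\ge 0$. Define the $d\times L$ matrices $J(x)=\sum_{m=1}^R\lambda_m\nabla\phi_m(x)\,v_m^\ast$, let $h>0$, $\sigma>0$, and set $$M=\frac{1}{(h\sigma)^2}\sum_{n=1}^N J(x_n)J(x_n)^\ast,$$ assumed invertible. Introduce the changed variables $\tilde x=M^{1/2}x$, $\tilde g(\tilde x)=g(x)$, $\tilde x_n=M^{1/2}x_n$, $\tilde y_n=M^{1/2}y_n$ with $y_n=\mathcal F_\tau(x_n)$, and $$\tilde J(\tilde x_n)=\lim_{\tau\to 0}\tau^{-1}\big[\nabla\tilde g(\tilde y_n)-\nabla\tilde g(\tilde x_n)\big].$$ Then the function defined on unit vectors $u$ by $$f(u)=\frac1N\sum_{n=1}^N\big|u^\ast\tilde J(\tilde x_n)\big|^2$$ is constant.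
   Context: All functions are assumed smooth enough for the derivatives and limits to make sense. Gradients $\nabla$ of a $1\times L$ row-vector-valued function are $d\times L$ matrices (gradient of each component as a column); $\nabla\tilde g$ denotes the gradient with respect to the variable $\tilde x$. $M^{1/2}$ is the Hermitian positive square root of the Hermitian positive definite matrix $M$, and $^\ast$ denotes conjugate transpose. *)

theory Defs
  imports "HOL-Analysis.Analysis"
begin

definition cstar :: "complex^'n^'m \<Rightarrow> complex^'m^'n" where
  "cstar A = (\<chi> i j. cnj (A $ j $ i))"

definition hermitian :: "complex^'n^'n \<Rightarrow> bool" where
  "hermitian A \<longleftrightarrow> cstar A = A"

definition pos_def :: "complex^'n^'n \<Rightarrow> bool" where
  "pos_def A \<longleftrightarrow> (\<forall>v::complex^'n. v \<noteq> 0 \<longrightarrow>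
      0 < Re (\<Sum>i\<in>UNIV. \<Sum>j\<in>UNIV. cnj (v $ i) * A $ i $ j * v $ j))"

definition msqrt :: "complex^'n^'n \<Rightarrow> complex^'n^'n" where
  "msqrt M = (THE S. hermitian S \<and> pos_def S \<and> S ** S = M)"

definition cgrad :: "(real^'d \<Rightarrow> complex) \<Rightarrow> real^'d \<Rightarrow> complex^'d" where
  "cgrad f x = (\<chi> i. frechet_derivative f (at x) (axis i 1))"

definition rowgrad :: "(real^'d \<Rightarrow> real^'l) \<Rightarrow> real^'d \<Rightarrow> complex^'l^'d" where
  "rowgrad G x = (\<chi> i j. complex_of_real (frechet_derivative G (at x) (axis i 1) $ j))"

end

theory Submission
  imports Defs
begin

text \<open>
  Under zero Koopman error the gradient of \<open>g \<circ> F\<^sub>\<tau>\<close> is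
  \<open>\<Sum>\<^sub>m exp(\<tau> \<lambda>\<^sub>m) \<nabla>\<phi>\<^sub>m v\<^sub>m\<^sup>*\<close>, so its difference quotient at \<open>\<tau> = 0\<close> tends to \<open>J(x)\<close>, and
  after the change of variables the limit at \<open>x\<^sub>n\<close> is \<open>M\<^sup>-\<^sup>1\<^sup>/\<^sup>2 J(x\<^sub>n)\<close>. Since
  \<open>\<Sum>\<^sub>n J(x\<^sub>n) J(x\<^sub>n)\<^sup>* = (h\<sigma>)\<^sup>2 M\<close>, the whitened Gram matrix is
  \<open>(h\<sigma>)\<^sup>2 M\<^sup>-\<^sup>1\<^sup>/\<^sup>2 M M\<^sup>-\<^sup>1\<^sup>/\<^sup>2 = (h\<sigma>)\<^sup>2 I\<close>, so \<open>f(u) = (h\<sigma>)\<^sup>2 / N\<close> on the unit sphere.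
  The Hermitian square root exists and is unique by the spectral theorem, obtained by repeatedly
  maximising the Rayleigh quotient on the orthogonal complement of the eigenvectors found so far.
\<close>

section \<open>Complex inner product and conjugate transpose\<close>

definition cinner :: "complex^'n \<Rightarrow> complex^'n \<Rightarrow> complex" where
  "cinner x y = (\<Sum>i\<in>UNIV. x $ i * cnj (y $ i))"

lemma scaleR_vec_nth: "((c::real) *\<^sub>R (x::complex^'n)) $ i = complex_of_real c * x $ i"
  by (simp only: vector_scaleR_component) (rule scaleR_conv_of_real)

lemma scaleR_vec_eq_scalar_mult: "(c::real) *\<^sub>R (x::complex^'n) = complex_of_real c *s x"
  by (simp add: vec_eq_iff scaleR_vec_nth del: vector_scaleR_component)

lemma scaleR_matrix_nth: "((c::real) *\<^sub>R (A::complex^'n^'m)) $ i $ j = complex_of_real c * A $ i $ j"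
  by (simp only: vector_scaleR_component) (rule scaleR_conv_of_real)

lemma inner_eq_Re_cinner: "(x::complex^'n) \<bullet> y = Re (cinner x y)"
  by (simp add: cinner_def inner_vec_def inner_complex_def Re_sum)

lemma cinner_self: "cinner x x = complex_of_real ((norm x)\<^sup>2)"
proof -
  have "(norm x)\<^sup>2 = (\<Sum>i\<in>UNIV. (norm (x $ i))\<^sup>2)"
    by (simp add: norm_vec_def L2_set_def sum_nonneg)
  then show ?thesis
    by (simp add: cinner_def complex_norm_square[symmetric] of_real_sum)
qed

lemma cinner_commute: "cinner y x = cnj (cinner x y)"
  by (simp add: cinner_def mult.commute)

lemma cinner_zero_left [simp]: "cinner 0 y = 0"
  by (simp add: cinner_def)

lemma cinner_add_left: "cinner (x + y) z = cinner x z + cinner y z"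
  by (simp add: cinner_def distrib_right sum.distrib)

lemma cinner_diff_left: "cinner (x - y) z = cinner x z - cinner y z"
  by (simp add: cinner_def left_diff_distrib sum_subtractf)

lemma cinner_scalar_mult_left: "cinner (c *s x) y = c * cinner x y"
  by (simp add: cinner_def sum_distrib_left mult.assoc)

lemma cinner_scalar_mult_right: "cinner x (c *s y) = cnj c * cinner x y"
  by (simp add: cinner_def sum_distrib_left algebra_simps)

lemma cinner_scaleR_left: "cinner (c *\<^sub>R x) y = complex_of_real c * cinner x y"
  by (simp add: scaleR_vec_eq_scalar_mult cinner_scalar_mult_left)

lemma cinner_sum_left: "cinner (\<Sum>e\<in>E. f e) y = (\<Sum>e\<in>E. cinner (f e) y)"
  by (induction E rule: infinite_finite_induct) (simp_all add: cinner_add_left)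

lemma cinner_adjoint: "cinner ((A::complex^'n^'m) *v x) y = cinner x (cstar A *v y)"
proof -
  have "cinner (A *v x) y = (\<Sum>i\<in>UNIV. \<Sum>j\<in>UNIV. A$i$j * x$j * cnj (y$i))"
    by (simp add: cinner_def matrix_vector_mult_def sum_distrib_right)
  also have "\<dots> = (\<Sum>j\<in>UNIV. \<Sum>i\<in>UNIV. A$i$j * x$j * cnj (y$i))"
    by (rule sum.swap)
  also have "\<dots> = cinner x (cstar A *v y)"
    by (simp add: cinner_def matrix_vector_mult_def sum_distrib_left cstar_def algebra_simps)
  finally show ?thesis .
qed

lemma hermitian_cinner: "hermitian A \<Longrightarrow> cinner (A *v x) y = cinner x (A *v y)"
  by (simp add: cinner_adjoint hermitian_def)

lemma hermitian_inner: "hermitian A \<Longrightarrow> (A *v x) \<bullet> y = x \<bullet> (A *v y)"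
  by (simp add: inner_eq_Re_cinner hermitian_cinner)

lemma pos_def_cinner: "pos_def A \<longleftrightarrow> (\<forall>v. v \<noteq> 0 \<longrightarrow> 0 < Re (cinner (A *v v) v))"
proof -
  have "(\<Sum>i\<in>UNIV. \<Sum>j\<in>UNIV. cnj (v $ i) * A $ i $ j * v $ j) = cinner (A *v v) v" for v
    by (simp add: cinner_def matrix_vector_mult_def sum_distrib_left sum_distrib_right algebra_simps)
  then show ?thesis
    by (simp add: pos_def_def)
qed

lemma cstar_cstar [simp]: "cstar (cstar A) = A"
  by (simp add: cstar_def vec_eq_iff)

lemma cstar_matrix_mult: "cstar ((A::complex^'n^'m) ** B) = cstar B ** cstar A"
  by (simp add: cstar_def matrix_matrix_mult_def vec_eq_iff mult.commute)

lemma cstar_mat: "cstar (mat c :: complex^'n^'n) = mat (cnj c)"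
  by (simp add: cstar_def mat_def vec_eq_iff)

lemma cstar_sum: "cstar (\<Sum>n\<in>N. A n :: complex^'n^'m) = (\<Sum>n\<in>N. cstar (A n))"
  by (simp add: cstar_def vec_eq_iff)

lemma cstar_scaleR: "cstar ((c::real) *\<^sub>R (A::complex^'n^'m)) = c *\<^sub>R cstar A"
  by (simp add: cstar_def vec_eq_iff scaleR_matrix_nth)

lemma hermitian_scaleR: "hermitian A \<Longrightarrow> hermitian (c *\<^sub>R A)"
  by (simp add: hermitian_def cstar_scaleR)

lemma matrix_vector_mult_scaleR_left:
  "((c::real) *\<^sub>R (A::complex^'n^'m)) *v x = c *\<^sub>R (A *v x)"
  by (simp add: vec_eq_iff scaleR_matrix_nth scaleR_vec_nth matrix_vector_mult_def sum_distrib_left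
      mult.assoc del: vector_scaleR_component)

lemma matrix_vector_mult_scaleR_right:
  "(A::complex^'n^'m) *v ((c::real) *\<^sub>R x) = c *\<^sub>R (A *v x)"
  by (simp add: scaleR_vec_eq_scalar_mult vector_scalar_commute)

lemma pos_def_scaleR: "pos_def A \<Longrightarrow> 0 < c \<Longrightarrow> pos_def (c *\<^sub>R A)"
  by (simp add: pos_def_cinner matrix_vector_mult_scaleR_left cinner_scaleR_left)

lemma matrix_vector_mult_sum_left:
  "(\<Sum>n\<in>N. A n) *v (x::'a::semiring_1^'n) = (\<Sum>n\<in>N. A n *v x)"
  by (induction N rule: infinite_finite_induct) (simp_all add: matrix_vector_mult_add_rdistrib)

lemma matrix_vector_mult_sum_right:
  "(A::'a::semiring_1^'n^'m) *v (\<Sum>n\<in>N. x n) = (\<Sum>n\<in>N. A *v x n)"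
  by (induction N rule: infinite_finite_induct) (simp_all add: matrix_vector_right_distrib)

lemma matrix_mult_sum_left:
  "(\<Sum>n\<in>N. A n) ** (B::'a::semiring_1^'p^'n) = (\<Sum>n\<in>N. A n ** B)"
proof (induction N rule: infinite_finite_induct)
  case (insert n N)
  then show ?case
    by (simp add: vec_eq_iff matrix_matrix_mult_def distrib_right sum.distrib)
qed simp_all

lemma matrix_mult_sum_right:
  "(B::'a::semiring_1^'n^'m) ** (\<Sum>n\<in>N. A n) = (\<Sum>n\<in>N. B ** A n)"
  by (induction N rule: infinite_finite_induct) (simp_all add: matrix_add_ldistrib)

lemma matrix_mult_diff_ldistrib: "(A::'a::ring_1^'n^'m) ** (B - C) = A ** B - A ** C"
  by (simp add: vec_eq_iff matrix_matrix_mult_def right_diff_distrib sum_subtractf)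

section \<open>Spectral theorem for Hermitian matrices\<close>

lemma nonpos_if_le_pos_multiples:
  fixes a b :: real
  assumes "\<And>t. 0 < t \<Longrightarrow> a \<le> t * b"
  shows "a \<le> 0"
proof (rule ccontr)
  assume "\<not> a \<le> 0"
  show False
  proof (cases "0 < b")
    case True
    then show False using assms[of "a / (2 * b)"] \<open>\<not> a \<le> 0\<close> by simp
  next
    case False
    then show False using assms[of 1] \<open>\<not> a \<le> 0\<close> by simp
  qed
qed

lemma subspace_rayleigh_quotient_max:
  fixes f :: "'a::euclidean_space \<Rightarrow> 'a"
  assumes "linear f" and sub: "subspace W" and "x0 \<in> W" "x0 \<noteq> 0"
  obtains v where "v \<in> W" "norm v = 1" "\<And>x. x \<in> W \<Longrightarrow> f x \<bullet> x \<le> (f v \<bullet> v) * (x \<bullet> x)"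
proof -
  define q where "q x = f x \<bullet> x" for x
  define K where "K = W \<inter> sphere 0 1"
  have "compact K"
    unfolding K_def using closed_subspace[OF sub] compact_sphere by (rule closed_Int_compact)
  moreover have "inverse (norm x0) *\<^sub>R x0 \<in> K"
    using assms(3,4) subspace_scale[OF sub] by (simp add: K_def)
  moreover have "continuous_on K q"
    unfolding q_def using \<open>linear f\<close>
    by (intro continuous_intros linear_continuous_on linear_conv_bounded_linear[THEN iffD1])
  ultimately obtain v where vK: "v \<in> K" and vmax: "\<And>y. y \<in> K \<Longrightarrow> q y \<le> q v"
    using continuous_attains_sup[of K q] by blast
  have "q x \<le> q v * (x \<bullet> x)" if "x \<in> W" for x
  proof (cases "x = 0")
    case False
    then have "inverse (norm x) *\<^sub>R x \<in> K"
      using that subspace_scale[OF sub] by (simp add: K_def)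
    then have "q (inverse (norm x) *\<^sub>R x) \<le> q v"
      by (rule vmax)
    then show ?thesis
      using False \<open>linear f\<close>
      by (simp add: q_def linear_scale dot_square_norm power2_eq_square field_simps)
  qed (simp add: q_def)
  moreover have "v \<in> W" "norm v = 1"
    using vK by (simp_all add: K_def)
  ultimately show thesis
    using that unfolding q_def by blast
qed

lemma hermitian_invariant_subspace_eigenvector:
  fixes M :: "complex^'n^'n"
  assumes herm: "hermitian M" and sub: "subspace W" and inv: "\<And>x. x \<in> W \<Longrightarrow> M *v x \<in> W"
    and "x0 \<in> W" "x0 \<noteq> 0"
  obtains v \<mu> where "v \<in> W" "norm v = 1" "M *v v = \<mu> *\<^sub>R v"
proof -
  obtain v where vW: "v \<in> W" and "norm v = 1"
    and rayleigh: "\<And>x. x \<in> W \<Longrightarrow> (M *v x) \<bullet> x \<le> ((M *v v) \<bullet> v) * (x \<bullet> x)"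
    using subspace_rayleigh_quotient_max[OF matrix_vector_mul_linear sub assms(4,5)] by blast
  define q where "q x = (M *v x) \<bullet> x" for x
  define \<mu> where "\<mu> = q v"
  have vv: "v \<bullet> v = 1"
    using \<open>norm v = 1\<close> by (simp add: dot_square_norm)
  \<comment> \<open>First-order optimality of \<open>v\<close> in the direction \<open>w\<close> forces \<open>w = 0\<close>.\<close>
  define w where "w = M *v v - \<mu> *\<^sub>R v"
  have wW: "w \<in> W"
    unfolding w_def by (intro subspace_diff[OF sub] subspace_scale[OF sub] inv vW)
  have vw: "v \<bullet> w = 0"
    by (simp add: w_def inner_diff_right vv \<mu>_def q_def inner_commute)
  have "M *v v = w + \<mu> *\<^sub>R v"
    by (simp add: w_def)
  then have Mvw: "(M *v v) \<bullet> w = w \<bullet> w"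
    by (simp add: inner_add_left inner_commute[of w v] vw)
  have "2 * (w \<bullet> w) \<le> 0"
  proof (rule nonpos_if_le_pos_multiples)
    fix t :: real assume "0 < t"
    have expand_q: "q (v + t *\<^sub>R w) = \<mu> + 2 * t * (w \<bullet> w) + t\<^sup>2 * q w"
      using hermitian_inner[OF herm, of w v]
      by (simp add: q_def \<mu>_def matrix_vector_mult_scaleR_right inner_add_left inner_add_right
          inner_commute[of w "M *v v"] Mvw power2_eq_square algebra_simps)
    have expand_norm: "(v + t *\<^sub>R w) \<bullet> (v + t *\<^sub>R w) = 1 + t\<^sup>2 * (w \<bullet> w)"
      by (simp add: inner_add_left inner_add_right vv vw inner_commute[of w v] power2_eq_square)
    have "q (v + t *\<^sub>R w) \<le> \<mu> * ((v + t *\<^sub>R w) \<bullet> (v + t *\<^sub>R w))"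
      unfolding q_def \<mu>_def by (intro rayleigh subspace_add[OF sub] subspace_scale[OF sub] vW wW)
    then have "\<mu> + 2 * t * (w \<bullet> w) + t\<^sup>2 * q w \<le> \<mu> * (1 + t\<^sup>2 * (w \<bullet> w))"
      unfolding expand_q expand_norm .
    then have "t * (2 * (w \<bullet> w)) \<le> t * (t * (\<mu> * (w \<bullet> w) - q w))"
      by (simp add: power2_eq_square algebra_simps)
    then show "2 * (w \<bullet> w) \<le> t * (\<mu> * (w \<bullet> w) - q w)"
      using \<open>0 < t\<close> by simp
  qed
  then have "w = 0"
    using inner_ge_zero[of w] by simp
  then show thesis
    using that vW \<open>norm v = 1\<close> by (simp add: w_def)
qed

definition cinner_orthonormal :: "(complex^'n) set \<Rightarrow> bool" where
  "cinner_orthonormal E \<longleftrightarrow> (\<forall>e\<in>E. \<forall>e'\<in>E. cinner e e' = (if e = e' then 1 else 0))"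

lemma cinner_orthonormal_finite_card:
  fixes E :: "(complex^'n) set"
  assumes "cinner_orthonormal E"
  shows "finite E \<and> card E \<le> DIM(complex^'n)"
proof -
  have "pairwise orthogonal E"
    using assms by (auto simp: cinner_orthonormal_def pairwise_def orthogonal_def inner_eq_Re_cinner)
  moreover have "0 \<notin> E"
    using assms by (force simp: cinner_orthonormal_def)
  ultimately show ?thesis
    using pairwise_orthogonal_independent independent_bound by blast
qed

lemma cinner_orthonormal_insert:
  assumes "cinner_orthonormal E" "cinner v v = 1" "\<And>e. e \<in> E \<Longrightarrow> cinner v e = 0"
  shows "cinner_orthonormal (insert v E)"
proof -
  have "cinner e v = 0" if "e \<in> E" for e
    using assms(3)[OF that] cinner_commute[of v e] by simp
  then show ?thesis
    using assms by (auto simp: cinner_orthonormal_def)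
qed

lemma cinner_orthonormal_sum:
  assumes "cinner_orthonormal E" "e \<in> E"
  shows "cinner (\<Sum>e'\<in>E. c e' *s e') e = c e"
proof -
  have "cinner (\<Sum>e'\<in>E. c e' *s e') e = (\<Sum>e'\<in>E. if e' = e then c e' else 0)"
    using assms by (auto simp: cinner_sum_left cinner_scalar_mult_left cinner_orthonormal_def
        intro!: sum.cong)
  also have "\<dots> = c e"
    using assms cinner_orthonormal_finite_card[OF assms(1)] by (simp add: sum.delta)
  finally show ?thesis .
qed

lemma hermitian_orthonormal_eigenvectors_extend:
  fixes M :: "complex^'n^'n"
  assumes herm: "hermitian M" and E: "cinner_orthonormal E"
    and eig: "\<And>e. e \<in> E \<Longrightarrow> \<exists>\<mu>::real. M *v e = \<mu> *\<^sub>R e"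
    and incomplete: "x \<noteq> (\<Sum>e\<in>E. cinner x e *s e)"
  obtains v \<mu> where "v \<notin> E" "cinner_orthonormal (insert v E)" "M *v v = \<mu> *\<^sub>R v"
proof -
  define W where "W = {z. \<forall>e\<in>E. cinner z e = 0}"
  have "subspace W"
    by (simp add: subspace_def W_def cinner_add_left cinner_scaleR_left)
  moreover have "M *v z \<in> W" if "z \<in> W" for z
  proof -
    have "cinner (M *v z) e = 0" if "e \<in> E" for e
      using eig[OF that] \<open>z \<in> W\<close> that
      by (auto simp: W_def hermitian_cinner[OF herm] scaleR_vec_eq_scalar_mult cinner_scalar_mult_right)
    then show ?thesis
      by (simp add: W_def)
  qed
  moreover have "x - (\<Sum>e\<in>E. cinner x e *s e) \<in> W"
    using E by (simp add: W_def cinner_diff_left cinner_orthonormal_sum)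
  moreover have "x - (\<Sum>e\<in>E. cinner x e *s e) \<noteq> 0"
    using incomplete by simp
  ultimately obtain v \<mu> where v: "v \<in> W" "norm v = 1" "M *v v = \<mu> *\<^sub>R v"
    using hermitian_invariant_subspace_eigenvector[OF herm] by metis
  then have "cinner v v = 1"
    by (simp add: cinner_self)
  moreover have "cinner v e = 0" if "e \<in> E" for e
    using v that by (simp add: W_def)
  ultimately show thesis
    using that[of v \<mu>] cinner_orthonormal_insert[OF E] v by force
qed

lemma hermitian_orthonormal_eigenbasis:
  fixes M :: "complex^'n^'n"
  assumes "hermitian M"
  obtains E where "cinner_orthonormal E" "\<And>e. e \<in> E \<Longrightarrow> \<exists>\<mu>::real. M *v e = \<mu> *\<^sub>R e"
    "\<And>x. x = (\<Sum>e\<in>E. cinner x e *s e)"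
proof -
  define P where "P k \<longleftrightarrow> (\<exists>E. cinner_orthonormal E \<and>
      (\<forall>e\<in>E. \<exists>\<mu>::real. M *v e = \<mu> *\<^sub>R e) \<and> card E = k)" for k
  have "P 0"
    unfolding P_def by (auto simp: cinner_orthonormal_def intro!: exI[of _ "{}"])
  moreover have "\<forall>k. P k \<longrightarrow> k \<le> DIM(complex^'n)"
  proof (intro allI impI)
    fix k assume "P k"
    then obtain E :: "(complex^'n) set" where "cinner_orthonormal E" "card E = k"
      unfolding P_def by blast
    then show "k \<le> DIM(complex^'n)"
      using cinner_orthonormal_finite_card[of E] by simp
  qed
  ultimately obtain k where "P k" and kmax: "\<And>k'. P k' \<Longrightarrow> k' \<le> k"
    using Nat.ex_has_greatest_nat[of P 0 "DIM(complex^'n)"] by blast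
  then obtain E where E: "cinner_orthonormal E" and eig: "\<And>e. e \<in> E \<Longrightarrow> \<exists>\<mu>::real. M *v e = \<mu> *\<^sub>R e"
    and "card E = k"
    unfolding P_def by blast
  have "x = (\<Sum>e\<in>E. cinner x e *s e)" for x
  proof (rule ccontr)
    assume "x \<noteq> (\<Sum>e\<in>E. cinner x e *s e)"
    then obtain v \<mu> where "v \<notin> E" "cinner_orthonormal (insert v E)" "M *v v = \<mu> *\<^sub>R v"
      using hermitian_orthonormal_eigenvectors_extend[OF assms E eig] by blast
    moreover have "finite E"
      using cinner_orthonormal_finite_card[OF E] by blast
    ultimately have "P (Suc k)"
      unfolding P_def using eig \<open>card E = k\<close> by (intro exI[of _ "insert v E"]) auto
    then show False
      using kmax by fastforce
  qed
  then show thesis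
    using that E eig by blast
qed

section \<open>The positive square root\<close>

lemma pos_def_eigenvalue_pos:
  assumes "pos_def T" "T *v y = \<mu> *\<^sub>R y" "y \<noteq> 0"
  shows "0 < \<mu>"
proof -
  have "0 < Re (cinner (T *v y) y)"
    using assms pos_def_cinner by blast
  also have "Re (cinner (T *v y) y) = \<mu> * (norm y)\<^sup>2"
    using assms(2) by (simp add: cinner_scaleR_left cinner_self)
  finally show ?thesis
    by (metis mult_nonpos_nonneg not_less zero_le_power2)
qed

lemma pos_def_sqrt_on_eigenvector:
  assumes T: "pos_def T" and TTe: "(T ** T) *v e = \<mu> *\<^sub>R e" and "0 \<le> \<mu>"
  shows "T *v e = sqrt \<mu> *\<^sub>R e"
proof (rule ccontr)
  define y where "y = T *v e - sqrt \<mu> *\<^sub>R e"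
  assume "T *v e \<noteq> sqrt \<mu> *\<^sub>R e"
  then have "y \<noteq> 0"
    by (simp add: y_def)
  have "sqrt \<mu> * sqrt \<mu> = \<mu>"
    using \<open>0 \<le> \<mu>\<close> by simp
  \<comment> \<open>\<open>(T + \<surd>\<mu>)(T - \<surd>\<mu>) e = (T\<^sup>2 - \<mu>) e = 0\<close>\<close>
  then have "T *v y = (- sqrt \<mu>) *\<^sub>R y"
    by (simp add: y_def matrix_vector_mult_diff_distrib matrix_vector_mult_scaleR_right
        matrix_vector_mul_assoc TTe scaleR_diff_right)
  then have "0 < - sqrt \<mu>"
    using pos_def_eigenvalue_pos[OF T] \<open>y \<noteq> 0\<close> by blast
  then show False
    using \<open>0 \<le> \<mu>\<close> by simp
qed

definition spectral_matrix :: "(complex^'n \<Rightarrow> real) \<Rightarrow> (complex^'n) set \<Rightarrow> complex^'n^'n" where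
  "spectral_matrix f E = (\<chi> i j. \<Sum>e\<in>E. complex_of_real (f e) * e $ i * cnj (e $ j))"

lemma spectral_matrix_mult_vec:
  "spectral_matrix f E *v x = (\<Sum>e\<in>E. (complex_of_real (f e) * cinner x e) *s e)"
proof -
  have "(spectral_matrix f E *v x) $ i
      = (\<Sum>j\<in>UNIV. \<Sum>e\<in>E. complex_of_real (f e) * e $ i * cnj (e $ j) * x $ j)" for i
    by (simp add: spectral_matrix_def matrix_vector_mult_def sum_distrib_right)
  also have "\<dots> i = (\<Sum>e\<in>E. \<Sum>j\<in>UNIV. complex_of_real (f e) * e $ i * cnj (e $ j) * x $ j)" for i
    by (rule sum.swap)
  also have "\<dots> i = (\<Sum>e\<in>E. (complex_of_real (f e) * cinner x e) * e $ i)" for i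
    by (simp add: cinner_def sum_distrib_left sum_distrib_right algebra_simps)
  finally show ?thesis
    by (simp add: vec_eq_iff)
qed

lemma hermitian_spectral_matrix: "hermitian (spectral_matrix f E)"
  by (simp add: hermitian_def cstar_def spectral_matrix_def vec_eq_iff algebra_simps)

lemma spectral_matrix_eigenvector:
  assumes "cinner_orthonormal E" "e \<in> E"
  shows "spectral_matrix f E *v e = f e *\<^sub>R e"
proof -
  have "spectral_matrix f E *v e = (\<Sum>e'\<in>E. if e' = e then complex_of_real (f e) *s e else 0)"
    unfolding spectral_matrix_mult_vec using assms
    by (intro sum.cong) (auto simp: cinner_orthonormal_def)
  also have "\<dots> = f e *\<^sub>R e"
    using assms cinner_orthonormal_finite_card[OF assms(1)]
    by (simp add: sum.delta scaleR_vec_eq_scalar_mult)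
  finally show ?thesis .
qed

lemma pos_def_spectral_matrix:
  fixes E :: "(complex^'n) set"
  assumes basis: "\<And>x. x = (\<Sum>e\<in>E. cinner x e *s e)" and "finite E" and pos: "\<And>e. e \<in> E \<Longrightarrow> 0 < f e"
  shows "pos_def (spectral_matrix f E)"
  unfolding pos_def_cinner
proof (intro allI impI)
  fix v :: "complex^'n"
  assume "v \<noteq> 0"
  then obtain e where "e \<in> E" "cinner v e \<noteq> 0"
    using basis[of v] by (metis (no_types, lifting) sum.neutral vector_smult_lzero)
  have "cinner (spectral_matrix f E *v v) v = (\<Sum>e\<in>E. complex_of_real (f e) * cinner v e * cinner e v)"
    by (simp add: spectral_matrix_mult_vec cinner_sum_left cinner_scalar_mult_left)
  also have "\<dots> = (\<Sum>e\<in>E. complex_of_real (f e * (cmod (cinner v e))\<^sup>2))"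
    by (intro sum.cong refl) (simp add: cinner_commute[of _ v] mult.assoc flip: complex_norm_square)
  moreover have "0 < (\<Sum>e\<in>E. f e * (cmod (cinner v e))\<^sup>2)"
    using \<open>e \<in> E\<close> \<open>cinner v e \<noteq> 0\<close> pos \<open>finite E\<close>
    by (intro sum_pos2[of E e]) (auto simp: less_imp_le)
  ultimately show "0 < Re (cinner (spectral_matrix f E *v v) v)"
    by (simp add: Re_sum)
qed

lemma matrix_eq_on_basis:
  fixes A B :: "complex^'n^'m"
  assumes basis: "\<And>x. x = (\<Sum>e\<in>E. cinner x e *s e)" and "\<And>e. e \<in> E \<Longrightarrow> A *v e = B *v e"
  shows "A = B"
proof (rule matrix_eq[THEN iffD2], rule allI)
  fix x
  have "A *v x = (\<Sum>e\<in>E. cinner x e *s (A *v e))"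
    by (subst basis) (simp add: matrix_vector_mult_sum_right vector_scalar_commute)
  also have "\<dots> = (\<Sum>e\<in>E. cinner x e *s (B *v e))"
    using assms(2) by simp
  also have "\<dots> = B *v x"
    by (subst (2) basis) (simp add: matrix_vector_mult_sum_right vector_scalar_commute)
  finally show "A *v x = B *v x" .
qed

lemma hermitian_pos_def_sqrt_ex1:
  fixes M :: "complex^'n^'n"
  assumes herm: "hermitian M" and pd: "pos_def M"
  shows "\<exists>!S. hermitian S \<and> pos_def S \<and> S ** S = M"
proof -
  obtain E where E: "cinner_orthonormal E" and eig: "\<And>e. e \<in> E \<Longrightarrow> \<exists>\<mu>::real. M *v e = \<mu> *\<^sub>R e"
    and basis: "\<And>x. x = (\<Sum>e\<in>E. cinner x e *s e)"
    using hermitian_orthonormal_eigenbasis[OF herm] by blast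
  obtain \<mu> where Me: "\<And>e. e \<in> E \<Longrightarrow> M *v e = \<mu> e *\<^sub>R e"
    using eig by metis
  have \<mu>_pos: "0 < \<mu> e" if "e \<in> E" for e
  proof (rule pos_def_eigenvalue_pos[OF pd Me[OF that]])
    show "e \<noteq> 0"
      using E that unfolding cinner_orthonormal_def by force
  qed
  define S where "S = spectral_matrix (\<lambda>e. sqrt (\<mu> e)) E"
  have Se: "S *v e = sqrt (\<mu> e) *\<^sub>R e" if "e \<in> E" for e
    unfolding S_def using E that by (rule spectral_matrix_eigenvector)
  have "hermitian S"
    by (simp add: S_def hermitian_spectral_matrix)
  moreover have "pos_def S"
    unfolding S_def using basis cinner_orthonormal_finite_card[OF E] \<mu>_pos
    by (intro pos_def_spectral_matrix) auto
  moreover have "S ** S = M"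
  proof (rule matrix_eq_on_basis[OF basis])
    fix e assume "e \<in> E"
    then show "(S ** S) *v e = M *v e"
      using \<mu>_pos[of e] by (simp flip: matrix_vector_mul_assoc
          add: Se Me matrix_vector_mult_scaleR_right less_imp_le)
  qed
  moreover have "T = S" if "pos_def T" "T ** T = M" for T
  proof (rule matrix_eq_on_basis[OF basis])
    fix e assume "e \<in> E"
    then show "T *v e = S *v e"
      using \<mu>_pos[of e] pos_def_sqrt_on_eigenvector[OF \<open>pos_def T\<close>] that(2) Me Se by simp
  qed
  ultimately show ?thesis
    by blast
qed

lemma msqrt_spec:
  assumes "hermitian M" "pos_def M"
  shows "hermitian (msqrt M) \<and> pos_def (msqrt M) \<and> msqrt M ** msqrt M = M"
  unfolding msqrt_def using hermitian_pos_def_sqrt_ex1[OF assms] by (rule theI')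

lemma invertible_square_imp_invertible:
  fixes A :: "'a::field^'n^'n"
  assumes "invertible (A ** A)"
  shows "invertible A"
proof -
  obtain B where "(A ** A) ** B = mat 1"
    using assms invertible_def by blast
  then have "A ** (A ** B) = mat 1"
    by (simp add: matrix_mul_assoc)
  then show ?thesis
    using invertible_right_inverse by blast
qed

lemma matrix_inv_cancel:
  assumes "invertible A"
  shows "A ** matrix_inv A = mat 1" "matrix_inv A ** A = mat 1"
  using someI_ex[OF assms[unfolded invertible_def]] by (simp_all add: matrix_inv_def)

lemma hermitian_matrix_inv:
  assumes "hermitian S" "invertible S"
  shows "hermitian (matrix_inv S)"
proof -
  have "cstar (matrix_inv S) ** S = mat 1"
    using assms matrix_inv_cancel(1)[of S] cstar_matrix_mult[of S "matrix_inv S"]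
    by (simp add: hermitian_def cstar_mat)
  then have "cstar (matrix_inv S) = cstar (matrix_inv S) ** (S ** matrix_inv S)"
    using matrix_inv_cancel(1)[OF assms(2)] by simp
  also have "\<dots> = matrix_inv S"
    by (simp add: matrix_mul_assoc \<open>cstar (matrix_inv S) ** S = mat 1\<close>)
  finally show ?thesis
    by (simp add: hermitian_def)
qed

lemma matrix_inv_sqrt_sandwich:
  fixes S :: "'a::field^'n^'n"
  assumes "invertible (S ** S)"
  shows "matrix_inv S ** (S ** S) ** matrix_inv S = mat 1"
proof -
  have "matrix_inv S ** (S ** S) ** matrix_inv S = (matrix_inv S ** S) ** (S ** matrix_inv S)"
    by (simp add: matrix_mul_assoc)
  then show ?thesis
    using matrix_inv_cancel[OF invertible_square_imp_invertible[OF assms]] by simp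
qed

lemma matrix_inv_msqrt:
  assumes "hermitian M" "pos_def M" "invertible M"
  shows "hermitian (matrix_inv (msqrt M))"
    and "matrix_inv (msqrt M) ** M ** matrix_inv (msqrt M) = mat 1"
  using msqrt_spec[OF assms(1,2)] assms(3) invertible_square_imp_invertible hermitian_matrix_inv
    matrix_inv_sqrt_sandwich by metis+

section \<open>Gram matrices\<close>

lemma hermitian_gram_sum: "hermitian (\<Sum>n\<in>N. B n ** cstar (B n))"
  by (simp add: hermitian_def cstar_sum cstar_matrix_mult)

lemma gram_sum_cinner:
  "cinner ((\<Sum>n\<in>N. B n ** cstar (B n)) *v v) v = complex_of_real (\<Sum>n\<in>N. (norm (cstar (B n) *v v))\<^sup>2)"
  by (simp add: matrix_vector_mult_sum_left cinner_sum_left cinner_adjoint cinner_self of_real_sum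
      flip: matrix_vector_mul_assoc)

lemma pos_def_invertible_gram_sum:
  fixes B :: "'i \<Rightarrow> complex^'l^'d"
  assumes "finite N" and inv: "invertible (\<Sum>n\<in>N. B n ** cstar (B n))"
  shows "pos_def (\<Sum>n\<in>N. B n ** cstar (B n))"
  unfolding pos_def_cinner
proof (intro allI impI)
  fix v :: "complex^'d"
  assume "v \<noteq> 0"
  have "((\<Sum>n\<in>N. B n ** cstar (B n)) *v v = (\<Sum>n\<in>N. B n ** cstar (B n)) *v 0) \<longleftrightarrow> v = 0"
    by (rule inj_eq[OF inj_matrix_vector_mult[OF inv]])
  then have "(\<Sum>n\<in>N. B n *v (cstar (B n) *v v)) \<noteq> 0"
    using \<open>v \<noteq> 0\<close> by (simp add: matrix_vector_mult_sum_left matrix_vector_mul_assoc)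
  then obtain n where "n \<in> N" "cstar (B n) *v v \<noteq> 0"
    by (metis (no_types, lifting) matrix_vector_mult_0_right sum.neutral)
  then have "0 < (\<Sum>n\<in>N. (norm (cstar (B n) *v v))\<^sup>2)"
    using \<open>finite N\<close> by (intro sum_pos2[of N n]) auto
  then show "0 < Re (cinner ((\<Sum>n\<in>N. B n ** cstar (B n)) *v v) v)"
    by (simp add: gram_sum_cinner)
qed

lemma norm_row_product_eq_norm_cstar:
  "norm (\<chi> j. \<Sum>i\<in>UNIV. cnj (u $ i) * (A::complex^'l^'d) $ i $ j) = norm (cstar A *v u)"
proof -
  have "(\<Sum>i\<in>UNIV. cnj (u $ i) * A $ i $ j) = cnj ((cstar A *v u) $ j)" for j
    by (simp add: cstar_def matrix_vector_mult_def mult.commute)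
  then show ?thesis
    by (simp add: norm_vec_def)
qed

lemma sum_power2_norm_row_product:
  "(\<Sum>n\<in>N. (norm (\<chi> j. \<Sum>i\<in>UNIV. cnj (u $ i) * (A n::complex^'l^'d) $ i $ j))\<^sup>2)
    = Re (cinner ((\<Sum>n\<in>N. A n ** cstar (A n)) *v u) u)"
  by (simp add: norm_row_product_eq_norm_cstar gram_sum_cinner)

lemma hermitian_pos_def_scaled_gram_sum:
  fixes B :: "'i \<Rightarrow> complex^'l^'d"
  assumes "finite N" "0 < c" "invertible (c *\<^sub>R (\<Sum>n\<in>N. B n ** cstar (B n)))"
  shows "hermitian (c *\<^sub>R (\<Sum>n\<in>N. B n ** cstar (B n)))"
    and "pos_def (c *\<^sub>R (\<Sum>n\<in>N. B n ** cstar (B n)))"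
proof -
  have "invertible (\<Sum>n\<in>N. B n ** cstar (B n))"
    using scalar_invertible[of "inverse c", OF _ assms(3)] \<open>0 < c\<close> by simp
  then show "hermitian (c *\<^sub>R (\<Sum>n\<in>N. B n ** cstar (B n)))"
    and "pos_def (c *\<^sub>R (\<Sum>n\<in>N. B n ** cstar (B n)))"
    using assms by (simp_all add: hermitian_scaleR hermitian_gram_sum pos_def_scaleR
        pos_def_invertible_gram_sum)
qed

lemma gram_sum_congruence:
  assumes "hermitian K"
  shows "(\<Sum>n\<in>N. (K ** B n) ** cstar (K ** B n)) = K ** (\<Sum>n\<in>N. B n ** cstar (B n)) ** K"
  using assms by (simp add: cstar_matrix_mult hermitian_def matrix_mult_sum_left matrix_mult_sum_right
      matrix_mul_assoc)

section \<open>Gradients under zero Koopman error\<close>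

lemma rowgrad_expansion:
  fixes G :: "real^'d \<Rightarrow> real^'l" and \<Phi> :: "nat \<Rightarrow> real^'d \<Rightarrow> complex"
    and c :: "nat \<Rightarrow> complex" and vs :: "nat \<Rightarrow> complex^'l"
  assumes G_diff: "G differentiable (at x)"
    and \<Phi>_diff: "\<And>m. m < r \<Longrightarrow> \<Phi> m differentiable (at x)"
    and expansion: "\<And>y. (\<chi> j. complex_of_real (G y $ j)) = (\<Sum>m<r. (c m * \<Phi> m y) *s vs m)"
  shows "rowgrad G x = (\<chi> i j. \<Sum>m<r. c m * cgrad (\<Phi> m) x $ i * vs m $ j)"
proof -
  define D where "D = frechet_derivative G (at x)"
  define D\<Phi> where "D\<Phi> m = frechet_derivative (\<Phi> m) (at x)" for m
  define L :: "real^'l \<Rightarrow> complex^'l" where "L y = (\<chi> j. complex_of_real (y $ j))" for y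
  have "linear L"
    by (rule linearI) (simp_all add: L_def vec_eq_iff scaleR_vec_eq_scalar_mult)
  moreover have "(G has_derivative D) (at x)"
    using G_diff by (simp add: D_def frechet_derivative_works)
  ultimately have "((\<lambda>y. L (G y)) has_derivative (\<lambda>h. L (D h))) (at x)"
    by (rule bounded_linear.has_derivative[OF linear_conv_bounded_linear[THEN iffD1]])
  moreover have "((\<lambda>y. L (G y)) has_derivative (\<lambda>h. \<Sum>m<r. (c m * D\<Phi> m h) *s vs m)) (at x)"
    unfolding L_def expansion
  proof (rule has_derivative_sum)
    fix m assume "m \<in> {..<r}"
    have "linear (\<lambda>a::complex. (c m * a) *s vs m)"
      by (rule linearI) (simp_all add: scaleR_vec_eq_scalar_mult scaleR_conv_of_real algebra_simps)
    moreover have "(\<Phi> m has_derivative D\<Phi> m) (at x)"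
      using \<Phi>_diff \<open>m \<in> {..<r}\<close> by (simp add: D\<Phi>_def frechet_derivative_works)
    ultimately show "((\<lambda>y. (c m * \<Phi> m y) *s vs m) has_derivative (\<lambda>h. (c m * D\<Phi> m h) *s vs m)) (at x)"
      by (rule bounded_linear.has_derivative[OF linear_conv_bounded_linear[THEN iffD1]])
  qed
  ultimately have "(\<lambda>h. L (D h)) = (\<lambda>h. \<Sum>m<r. (c m * D\<Phi> m h) *s vs m)"
    by (rule has_derivative_unique)
  then have "L (D h) = (\<Sum>m<r. (c m * D\<Phi> m h) *s vs m)" for h
    by metis
  then have "complex_of_real (D h $ j) = (\<Sum>m<r. c m * D\<Phi> m h * vs m $ j)" for h j
    by (simp add: L_def vec_eq_iff)
  then show ?thesis
    by (simp add: rowgrad_def cgrad_def vec_eq_iff D_def D\<Phi>_def)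
qed

lemma exp_difference_quotient:
  "((\<lambda>\<tau>::real. complex_of_real (1 / \<tau>) * (exp (complex_of_real \<tau> * l) - 1)) \<longlongrightarrow> l) (at_right 0)"
proof -
  have "((\<lambda>z. exp (z * l)) has_field_derivative l) (at 0)"
    by (auto intro!: derivative_eq_intros)
  then have "((\<lambda>z. (exp (z * l) - 1) / z) \<longlongrightarrow> l) (at (0::complex))"
    by (simp add: has_field_derivative_iff)
  have "((\<lambda>\<tau>. complex_of_real \<tau>) \<longlongrightarrow> complex_of_real 0) (at_right 0)"
    by (intro tendsto_intros)
  moreover have "\<forall>\<^sub>F \<tau> in at_right 0. complex_of_real \<tau> \<noteq> 0"
    using eventually_at_right_less[of "0::real"] by (rule eventually_mono) simp
  ultimately have "filterlim complex_of_real (at 0) (at_right 0)"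
    by (intro filterlim_atI) simp_all
  from filterlim_compose[OF \<open>((\<lambda>z. (exp (z * l) - 1) / z) \<longlongrightarrow> l) (at 0)\<close> this]
  have "((\<lambda>\<tau>. (exp (complex_of_real \<tau> * l) - 1) / complex_of_real \<tau>) \<longlongrightarrow> l) (at_right 0)"
    by simp
  then show ?thesis
    by (simp add: divide_inverse mult.commute of_real_inverse)
qed

lemma tendsto_matrix_mult_left:
  "(B \<longlongrightarrow> L) F \<Longrightarrow> ((\<lambda>t. (K::'a::real_normed_field^'n^'m) ** B t) \<longlongrightarrow> K ** L) F"
  unfolding matrix_matrix_mult_def by (intro tendsto_intros)

lemma koopman_rowgrad_difference_quotient:
  fixes F :: "real \<Rightarrow> real^'d \<Rightarrow> real^'d" and g :: "real^'d \<Rightarrow> real^'l"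
    and phi :: "nat \<Rightarrow> real^'d \<Rightarrow> complex" and lam :: "nat \<Rightarrow> complex" and vs :: "nat \<Rightarrow> complex^'l"
  assumes F_diff: "\<And>\<tau>. 0 \<le> \<tau> \<Longrightarrow> F \<tau> differentiable (at x)"
    and g_diff: "\<And>\<tau>. 0 \<le> \<tau> \<Longrightarrow> g differentiable (at (F \<tau> x))"
    and phi_diff: "\<And>m. m < r \<Longrightarrow> phi m differentiable (at x)"
    and zero_err: "\<And>\<tau> y. 0 \<le> \<tau> \<Longrightarrow>
        (\<chi> j. complex_of_real (g (F \<tau> y) $ j)) = (\<Sum>m<r. (exp (complex_of_real \<tau> * lam m) * phi m y) *s vs m)"
  shows "((\<lambda>\<tau>. (1 / \<tau>) *\<^sub>R (rowgrad (\<lambda>y. g (F \<tau> y)) x - rowgrad (\<lambda>y. g (F 0 y)) x))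
      \<longlongrightarrow> (\<Sum>m<r. \<chi> i j. lam m * cgrad (phi m) x $ i * vs m $ j)) (at_right 0)"
proof -
  define a where "a m i j = cgrad (phi m) x $ i * vs m $ j" for m i j
  have grad: "rowgrad (\<lambda>y. g (F \<tau> y)) x
      = (\<chi> i j. \<Sum>m<r. exp (complex_of_real \<tau> * lam m) * cgrad (phi m) x $ i * vs m $ j)"
    if "0 \<le> \<tau>" for \<tau>
  proof (rule rowgrad_expansion[OF _ phi_diff zero_err[OF that]])
    show "(\<lambda>y. g (F \<tau> y)) differentiable (at x)"
      using differentiable_chain_at[OF F_diff g_diff, OF that that] by (simp add: o_def)
  qed
  have "\<forall>\<^sub>F \<tau> in at_right 0. (1 / \<tau>) *\<^sub>R (rowgrad (\<lambda>y. g (F \<tau> y)) x - rowgrad (\<lambda>y. g (F 0 y)) x)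
      = (\<chi> i j. \<Sum>m<r. complex_of_real (1 / \<tau>) * (exp (complex_of_real \<tau> * lam m) - 1) * a m i j)"
    using eventually_at_right_less[of "0::real"]
    by (rule eventually_mono) (simp add: grad a_def vec_eq_iff scaleR_matrix_nth sum_subtractf
        sum_distrib_left algebra_simps del: vector_scaleR_component)
  moreover have "((\<lambda>\<tau>. \<chi> i j. \<Sum>m<r. complex_of_real (1 / \<tau>) * (exp (complex_of_real \<tau> * lam m) - 1) * a m i j)
      \<longlongrightarrow> (\<chi> i j. \<Sum>m<r. lam m * a m i j)) (at_right 0)"
    by (intro tendsto_intros exp_difference_quotient)
  moreover have "(\<chi> i j. \<Sum>m<r. lam m * a m i j) = (\<Sum>m<r. \<chi> i j. lam m * cgrad (phi m) x $ i * vs m $ j)"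
    by (simp add: vec_eq_iff a_def mult.assoc)
  ultimately show ?thesis
    using tendsto_cong by fastforce
qed

lemma koopman_gradient_generator:
  fixes F :: "real \<Rightarrow> real^'d \<Rightarrow> real^'d" and g :: "real^'d \<Rightarrow> real^'l"
    and phi :: "nat \<Rightarrow> real^'d \<Rightarrow> complex" and lam :: "nat \<Rightarrow> complex" and vs :: "nat \<Rightarrow> complex^'l"
    and K :: "complex^'d^'k"
  assumes "\<And>\<tau>. 0 \<le> \<tau> \<Longrightarrow> F \<tau> differentiable (at x)"
    and "\<And>\<tau>. 0 \<le> \<tau> \<Longrightarrow> g differentiable (at (F \<tau> x))"
    and "\<And>m. m < r \<Longrightarrow> phi m differentiable (at x)"
    and "\<And>\<tau> y. 0 \<le> \<tau> \<Longrightarrow>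
        (\<chi> j. complex_of_real (g (F \<tau> y) $ j)) = (\<Sum>m<r. (exp (complex_of_real \<tau> * lam m) * phi m y) *s vs m)"
  shows "Lim (at_right 0)
      (\<lambda>\<tau>. (1 / \<tau>) *\<^sub>R (K ** rowgrad (\<lambda>y. g (F \<tau> y)) x - K ** rowgrad (\<lambda>y. g (F 0 y)) x))
    = K ** (\<Sum>m<r. \<chi> i j. lam m * cgrad (phi m) x $ i * vs m $ j)"
proof (rule tendsto_Lim[OF trivial_limit_at_right_real])
  show "((\<lambda>\<tau>. (1 / \<tau>) *\<^sub>R (K ** rowgrad (\<lambda>y. g (F \<tau> y)) x - K ** rowgrad (\<lambda>y. g (F 0 y)) x))
      \<longlongrightarrow> K ** (\<Sum>m<r. \<chi> i j. lam m * cgrad (phi m) x $ i * vs m $ j)) (at_right 0)"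
    using tendsto_matrix_mult_left[OF koopman_rowgrad_difference_quotient[OF assms], of K]
    by (simp add: matrix_scalar_ac scalar_matrix_assoc matrix_mult_diff_ldistrib scaleR_diff_right)
qed

theorem proposition1:
  fixes xs :: "nat \<Rightarrow> real^'d" and N :: nat
    and F :: "real \<Rightarrow> real^'d \<Rightarrow> real^'d"
    and g :: "real^'d \<Rightarrow> real^'l"
    and r :: nat and lam :: "nat \<Rightarrow> complex"
    and phi :: "nat \<Rightarrow> real^'d \<Rightarrow> complex"
    and vs :: "nat \<Rightarrow> complex^'l"
    and h \<sigma> :: real
    and J :: "real^'d \<Rightarrow> complex^'l^'d"
    and M S :: "complex^'d^'d"
    and Gt :: "real \<Rightarrow> nat \<Rightarrow> complex^'l^'d"
    and Jt :: "nat \<Rightarrow> complex^'l^'d"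
    and f :: "complex^'d \<Rightarrow> real"
  assumes F0: "\<And>x. F 0 x = x"
    and Fsemigroup: "\<And>s t x. 0 \<le> s \<Longrightarrow> 0 \<le> t \<Longrightarrow> F (s + t) x = F s (F t x)"
    and F_diff: "\<And>\<tau> x. 0 \<le> \<tau> \<Longrightarrow> F \<tau> differentiable (at x)"
    and g_diff: "\<And>x. g differentiable (at x)"
    and phi_diff: "\<And>m x. m < r \<Longrightarrow> phi m differentiable (at x)"
    and zero_err: "\<And>\<tau> x. 0 \<le> \<tau> \<Longrightarrow>
        (\<chi> j. complex_of_real (g (F \<tau> x) $ j)) =
        (\<Sum>m<r. (exp (complex_of_real \<tau> * lam m) * phi m x) *s vs m)"
    and J_def: "\<And>x. J x = (\<Sum>m<r. \<chi> i j. lam m * cgrad (phi m) x $ i * vs m $ j)"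
    and hpos: "h > 0" and \<sigma>pos: "\<sigma> > 0"
    and M_def: "M = (1 / (h * \<sigma>)\<^sup>2) *\<^sub>R (\<Sum>n\<in>{1..N}. J (xs n) ** cstar (J (xs n)))"
    and M_inv: "invertible M"
    and S_def: "S = msqrt M"
    and Gt_def: "\<And>\<tau> n. Gt \<tau> n = matrix_inv S ** rowgrad (\<lambda>x. g (F \<tau> x)) (xs n)"
    and Jt_def: "\<And>n. Jt n = Lim (at_right 0) (\<lambda>\<tau>. (1 / \<tau>) *\<^sub>R (Gt \<tau> n - Gt 0 n))"
    and f_def: "\<And>u. f u = (1 / real N) *
        (\<Sum>n\<in>{1..N}. (norm (\<chi> j. \<Sum>i\<in>UNIV. cnj (u $ i) * Jt n $ i $ j))\<^sup>2)"
  shows "\<exists>c. \<forall>u. norm u = 1 \<longrightarrow> f u = c"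
proof -
  define K where "K = matrix_inv S"
  have "0 < (h * \<sigma>)\<^sup>2"
    using hpos \<sigma>pos by simp
  have "hermitian M" "pos_def M"
    using M_inv \<open>0 < (h * \<sigma>)\<^sup>2\<close> unfolding M_def by (auto intro: hermitian_pos_def_scaled_gram_sum)
  then have hK: "hermitian K" and KMK: "K ** M ** K = mat 1"
    using matrix_inv_msqrt[OF _ _ M_inv] by (simp_all add: K_def S_def)
  have Jt: "Jt n = K ** J (xs n)" for n
    unfolding Jt_def Gt_def J_def K_def
    by (rule koopman_gradient_generator[OF F_diff g_diff phi_diff zero_err])
  have "(\<Sum>n\<in>{1..N}. Jt n ** cstar (Jt n)) = (h * \<sigma>)\<^sup>2 *\<^sub>R (K ** M ** K)"
    using \<open>0 < (h * \<sigma>)\<^sup>2\<close> unfolding Jt gram_sum_congruence[OF hK] M_def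
    by (simp add: matrix_scalar_ac scalar_matrix_assoc)
  then have "f u = (h * \<sigma>)\<^sup>2 / real N" if "norm u = 1" for u
    unfolding f_def sum_power2_norm_row_product using that
    by (simp add: KMK matrix_vector_mult_scaleR_left cinner_scaleR_left cinner_self)
  then show ?thesis
    by blast
qed

end
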